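(* Let $d\ge 0$ be an integer and let $r,s\in(-1,\infty)$ with $r\neq 0$ and $r+s=0$. Then $L,\left(L^*+\frac{r-d}{2}\right)^2$ is a Leonard pair on $\mathcal P_d(\mathbb R)$ (here $L^*+\frac{r-d}{2}$ means $L^*+\frac{r-d}{2}\cdot\mathrm{id}$).
   Context: Write $(x)_i=x(x+1)\cdots(x+i-1)$, with $(x)_0=1$. For $0\le i\le d$ put $\theta_i=(d-i)(d-i+r+s+1)$ and $\theta^*_i=i$; the $\theta_i$ are mutually distinct. Put $b^*_i=\frac{(d-i)(i-d-s)(2d-2i+r+s+2)_i}{(2d-2i+r+s)_{i+1}}$ for $0\le i\le d-1$, $c^*_i=\frac{i(i-d-r-1)(d-i+r+s+1)_{d-i}}{(d-i+r+s+2)_{d-i+1}}$ for $1\le i\le d$, $b^*_d=c^*_0=0$, and $a^*_i=\theta^*_0-b^*_i-c^*_i$ for $0\le i\le d$. Let $\mathcal P_d(\mathbb R)$ be the real vector space of polynomials in $x$ of degree at most $d$; each element is determined by its values at $\theta_0,\dots,\theta_d$. Let $L,L^*$ be the linear maps on $\mathcal P_d(\mathbb R)$ defined by $(Lf)(\theta_i)=\theta_i f(\theta_i)$ and $(L^*f)(\theta_i)=b^*_i f(\theta_{i+1})+a^*_i f(\theta_i)+c^*_i f(\theta_{i-1})$ for $0\le i\le d$ (terms with coefficient $b^*_d$ or $c^*_0$ are omitted). A square matrix is tridiagonal if its nonzero entries lie on the diagonal, subdiagonal or superdiagonal; it is irreducible tridiagonal if moreover all subdiagonal and superdiagonal entries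 are nonzero. A Leonard pair on a nonzero finite-dimensional vector space $V$ is an ordered pair $A,A^*$ of linear maps $V\to V$ such that (1) there is an ordered basis of $V$ in which $A$ is diagonal and $A^*$ is irreducible tridiagonal, and (2) there is an ordered basis of $V$ in which $A^*$ is diagonal and $A$ is irreducible tridiagonal. *)

theory Defs
  imports "HOL-Computational_Algebra.Polynomial"
begin

definition Pd :: "nat \<Rightarrow> real poly set" where
  "Pd d = {p. degree p \<le> d}"

definition theta :: "real \<Rightarrow> real \<Rightarrow> nat \<Rightarrow> nat \<Rightarrow> real" where
  "theta r s d i = (real d - real i) * (real d - real i + r + s + 1)"

definition thetas :: "nat \<Rightarrow> real" where
  "thetas i = real i"

definition bstar :: "real \<Rightarrow> real \<Rightarrow> nat \<Rightarrow> nat \<Rightarrow> real" where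
  "bstar r s d i = (if i < d then
     (real d - real i) * (real i - real d - s) *
       pochhammer (2 * real d - 2 * real i + r + s + 2) i /
       pochhammer (2 * real d - 2 * real i + r + s) (i + 1)
   else 0)"

definition cstar :: "real \<Rightarrow> real \<Rightarrow> nat \<Rightarrow> nat \<Rightarrow> real" where
  "cstar r s d i = (if 1 \<le> i \<and> i \<le> d then
     real i * (real i - real d - r - 1) *
       pochhammer (real d - real i + r + s + 1) (d - i) /
       pochhammer (real d - real i + r + s + 2) (d - i + 1)
   else 0)"

definition astar :: "real \<Rightarrow> real \<Rightarrow> nat \<Rightarrow> nat \<Rightarrow> real" where
  "astar r s d i = thetas 0 - bstar r s d i - cstar r s d i"

definition interp :: "real \<Rightarrow> real \<Rightarrow> nat \<Rightarrow> (nat \<Rightarrow> real) \<Rightarrow> real poly" where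
  "interp r s d v = (\<Sum>i\<le>d. smult (v i)
      (\<Prod>j\<in>{..d} - {i}. smult (1 / (theta r s d i - theta r s d j)) [:- theta r s d j, 1:]))"

definition Lmap :: "real \<Rightarrow> real \<Rightarrow> nat \<Rightarrow> real poly \<Rightarrow> real poly" where
  "Lmap r s d f = interp r s d (\<lambda>i. theta r s d i * poly f (theta r s d i))"

definition Lstar :: "real \<Rightarrow> real \<Rightarrow> nat \<Rightarrow> real poly \<Rightarrow> real poly" where
  "Lstar r s d f = interp r s d (\<lambda>i.
      (if i < d then bstar r s d i * poly f (theta r s d (i + 1)) else 0)
      + astar r s d i * poly f (theta r s d i)
      + (if 0 < i then cstar r s d i * poly f (theta r s d (i - 1)) else 0))"

definition linear_on :: "real poly set \<Rightarrow> (real poly \<Rightarrow> real poly) \<Rightarrow> bool" where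
  "linear_on V A \<longleftrightarrow> (\<forall>v\<in>V. A v \<in> V) \<and>
     (\<forall>u\<in>V. \<forall>v\<in>V. A (u + v) = A u + A v) \<and>
     (\<forall>c. \<forall>v\<in>V. A (smult c v) = smult c (A v))"

definition ordered_basis :: "real poly set \<Rightarrow> nat \<Rightarrow> (nat \<Rightarrow> real poly) \<Rightarrow> bool" where
  "ordered_basis V n B \<longleftrightarrow> (\<forall>i<n. B i \<in> V) \<and>
     (\<forall>v\<in>V. \<exists>!c. (\<forall>i\<ge>n. c i = (0::real)) \<and> v = (\<Sum>i<n. smult (c i) (B i)))"

definition matrix_of :: "nat \<Rightarrow> (nat \<Rightarrow> real poly) \<Rightarrow> (real poly \<Rightarrow> real poly)
     \<Rightarrow> (nat \<Rightarrow> nat \<Rightarrow> real) \<Rightarrow> bool" where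
  "matrix_of n B A M \<longleftrightarrow> (\<forall>j<n. A (B j) = (\<Sum>i<n. smult (M i j) (B i)))"

definition diagonal_mat :: "nat \<Rightarrow> (nat \<Rightarrow> nat \<Rightarrow> real) \<Rightarrow> bool" where
  "diagonal_mat n M \<longleftrightarrow> (\<forall>i<n. \<forall>j<n. i \<noteq> j \<longrightarrow> M i j = 0)"

definition irred_tridiagonal_mat :: "nat \<Rightarrow> (nat \<Rightarrow> nat \<Rightarrow> real) \<Rightarrow> bool" where
  "irred_tridiagonal_mat n M \<longleftrightarrow>
     (\<forall>i<n. \<forall>j<n. (i > j + 1 \<or> j > i + 1) \<longrightarrow> M i j = 0) \<and>
     (\<forall>i. i + 1 < n \<longrightarrow> M (i + 1) i \<noteq> 0 \<and> M i (i + 1) \<noteq> 0)"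

definition leonard_pair :: "real poly set \<Rightarrow> (real poly \<Rightarrow> real poly)
     \<Rightarrow> (real poly \<Rightarrow> real poly) \<Rightarrow> bool" where
  "leonard_pair V A As \<longleftrightarrow> linear_on V A \<and> linear_on V As \<and>
     (\<exists>n B M Ms. ordered_basis V n B \<and> matrix_of n B A M \<and> matrix_of n B As Ms \<and>
        diagonal_mat n M \<and> irred_tridiagonal_mat n Ms) \<and>
     (\<exists>n B M Ms. ordered_basis V n B \<and> matrix_of n B A M \<and> matrix_of n B As Ms \<and>
        diagonal_mat n Ms \<and> irred_tridiagonal_mat n M)"

end

theory Submission
  imports Defs
begin

text \<open>
  For \<open>r + s = 0\<close> the nodes are \<open>\<theta>\<^sub>i = y (y + 1)\<close> with \<open>y = d - i\<close>.  In the Lagrange basis at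
  these nodes \<open>L\<close> is diagonal and \<open>L* + (r - d)/2\<close> is tridiagonal with vanishing diagonal except
  for its last entry \<open>r (d + 1)/2 \<noteq> 0\<close>.  Its square therefore couples \<open>i\<close> with \<open>i - 2\<close> and \<open>i + 2\<close>,
  and \<open>d - 1\<close> with \<open>d\<close>; this graph is a single path, and listing the Lagrange basis along the path
  makes the square irreducible tridiagonal.

  Conversely, \<open>L*\<close> is lower bidiagonal with diagonal \<open>0, 1, \<dots>, d\<close> in the Newton basis of the
  polynomials \<open>\<Prod>l<k. (x - l (l + 1))\<close>, so it has a monic eigenpolynomial of each degree \<open>j \<le> d\<close>,
  and these diagonalize \<open>(L* + (r - d)/2)\<^sup>2\<close>.  Since \<open>b*(i) c*(i + 1) > 0\<close>, the weights that make the
  tridiagonal \<open>L*\<close> symmetric are positive, so the eigenpolynomials are orthogonal polynomials for a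
  discrete measure on the nodes; their three-term recurrence makes \<open>L\<close> irreducible tridiagonal.
\<close>

lemma ordered_basisI:
  assumes "\<And>i. i < n \<Longrightarrow> B i \<in> V"
    and expansion: "\<And>v. v \<in> V \<Longrightarrow> v = (\<Sum>i<n. smult (coord i v) (B i))"
    and coord_sum: "\<And>c m. m < n \<Longrightarrow> coord m (\<Sum>i<n. smult (c i) (B i)) = c m"
  shows "ordered_basis V n B"
  unfolding ordered_basis_def
proof (intro conjI ballI allI impI assms(1))
  fix v assume "v \<in> V"
  let ?c = "\<lambda>i. if i < n then coord i v else 0"
  have "v = (\<Sum>i<n. smult (?c i) (B i))"
    using expansion[OF \<open>v \<in> V\<close>] by simp
  moreover have "c = ?c" if "\<forall>i\<ge>n. c i = 0" "v = (\<Sum>i<n. smult (c i) (B i))" for c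
    using that coord_sum by (auto simp: not_less)
  ultimately show "\<exists>!c. (\<forall>i\<ge>n. c i = 0) \<and> v = (\<Sum>i<n. smult (c i) (B i))"
    by (intro ex1I[of _ ?c]) auto
qed

lemma matrix_of_coordinates:
  assumes "\<And>v. v \<in> V \<Longrightarrow> v = (\<Sum>i<n. smult (coord i v) (B i))"
    and "\<And>j. j < n \<Longrightarrow> A (B j) \<in> V"
  shows "matrix_of n B A (\<lambda>i j. coord i (A (B j)))"
  using assms unfolding matrix_of_def by blast

lemma linear_onI:
  assumes "\<And>v. v \<in> V \<Longrightarrow> A v \<in> V"
    and "\<And>u v. A (u + v) = A u + A v" and "\<And>c v. A (smult c v) = smult c (A v)"
  shows "linear_on V A"
  using assms unfolding linear_on_def by blast

lemma linear_on_comp: "linear_on V A \<Longrightarrow> linear_on V B \<Longrightarrow> linear_on V (A \<circ> B)"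
  unfolding linear_on_def by auto

lemma smult_sum_right: "smult c (\<Sum>i\<in>S. f i) = (\<Sum>i\<in>S. smult c (f i))"
  by (induction S rule: infinite_finite_induct) (auto simp: smult_add_right)

lemma degree_sum_smult_le:
  "(\<And>i. i \<in> S \<Longrightarrow> degree (p i) \<le> n) \<Longrightarrow> degree (\<Sum>i\<in>S. smult (c i) (p i)) \<le> n"
  by (cases "finite S") (auto intro!: degree_sum_le intro: order_trans[OF degree_smult_le])

definition lagrange_interp :: "(nat \<Rightarrow> real) \<Rightarrow> nat \<Rightarrow> (nat \<Rightarrow> real) \<Rightarrow> real poly" where
  "lagrange_interp x d v = (\<Sum>i\<le>d. smult (v i)
      (\<Prod>j\<in>{..d} - {i}. smult (1 / (x i - x j)) [:- x j, 1:]))"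

lemma interp_eq_lagrange_interp: "interp r s d = lagrange_interp (theta r s d) d"
  by (intro ext) (simp add: interp_def lagrange_interp_def)

lemma degree_lagrange_interp: "degree (lagrange_interp x d v) \<le> d"
  unfolding lagrange_interp_def
proof (intro degree_sum_smult_le)
  fix i assume "i \<in> {..d}"
  have "degree (\<Prod>j\<in>{..d} - {i}. smult (1 / (x i - x j)) [:- x j, 1:])
      \<le> sum (degree \<circ> (\<lambda>j. smult (1 / (x i - x j)) [:- x j, 1:])) ({..d} - {i})"
    by (rule degree_prod_sum_le) simp
  also have "\<dots> \<le> (\<Sum>j\<in>{..d} - {i}. 1)"
    by (intro sum_mono) (simp add: order_trans[OF degree_smult_le])
  also have "\<dots> = d"
    using \<open>i \<in> {..d}\<close> by simp
  finally show "degree (\<Prod>j\<in>{..d} - {i}. smult (1 / (x i - x j)) [:- x j, 1:]) \<le> d" .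
qed

lemma lagrange_interp_add:
  "lagrange_interp x d (\<lambda>i. u i + v i) = lagrange_interp x d u + lagrange_interp x d v"
  unfolding lagrange_interp_def by (simp add: smult_add_left sum.distrib)

lemma lagrange_interp_scale:
  "lagrange_interp x d (\<lambda>i. c * v i) = smult c (lagrange_interp x d v)"
  unfolding lagrange_interp_def by (simp add: smult_sum_right)

locale interpolation_nodes =
  fixes x :: "nat \<Rightarrow> real" and d :: nat
  assumes inj_on_nodes: "inj_on x {..d}"
begin

lemma poly_eqI_nodes:
  assumes "degree p \<le> d" "degree q \<le> d" "\<And>k. k \<le> d \<Longrightarrow> poly p (x k) = poly q (x k)"
  shows "p = q"
proof (rule poly_eqI_degree[of "x ` {..d}"])
  show "card (x ` {..d}) > degree p" "card (x ` {..d}) > degree q"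
    using assms(1,2) card_image[OF inj_on_nodes] by simp_all
qed (use assms(3) in auto)

lemma poly_lagrange_interp:
  assumes "k \<le> d"
  shows "poly (lagrange_interp x d v) (x k) = v k"
proof -
  have factor: "(\<Prod>j\<in>{..d} - {i}. (x k - x j) / (x i - x j)) = of_bool (i = k)" if "i \<le> d" for i
  proof (cases "i = k")
    case True
    then show ?thesis
      using inj_on_nodes that by (auto intro!: prod.neutral simp: inj_on_eq_iff)
  next
    case False
    then show ?thesis
      using assms by (auto intro!: prod_zero bexI[of _ k])
  qed
  have "poly (lagrange_interp x d v) (x k)
      = (\<Sum>i\<le>d. v i * (\<Prod>j\<in>{..d} - {i}. (x k - x j) / (x i - x j)))"
    unfolding lagrange_interp_def by (simp add: poly_sum poly_prod diff_divide_distrib)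
  also have "\<dots> = (\<Sum>i\<le>d. v i * of_bool (i = k))"
    by (intro sum.cong refl) (simp add: factor)
  finally show ?thesis
    using assms by simp
qed

lemma lagrange_interp_eqI:
  assumes "degree p \<le> d" "\<And>i. i \<le> d \<Longrightarrow> v i = poly p (x i)"
  shows "lagrange_interp x d v = p"
  using assms by (intro poly_eqI_nodes degree_lagrange_interp) (simp_all add: poly_lagrange_interp)

definition lagrange_basis :: "nat \<Rightarrow> real poly" where
  "lagrange_basis j = lagrange_interp x d (\<lambda>i. of_bool (i = j))"

lemma poly_lagrange_basis: "k \<le> d \<Longrightarrow> poly (lagrange_basis j) (x k) = of_bool (k = j)"
  unfolding lagrange_basis_def by (rule poly_lagrange_interp)

lemma ordered_basis_lagrange_basis:
  assumes \<sigma>: "bij_betw \<sigma> {..d} {..d}"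
  shows "ordered_basis (Pd d) (Suc d) (\<lambda>i. lagrange_basis (\<sigma> i))"
    and "linear_on (Pd d) A \<Longrightarrow>
      matrix_of (Suc d) (\<lambda>i. lagrange_basis (\<sigma> i)) A (\<lambda>i j. poly (A (lagrange_basis (\<sigma> j))) (x (\<sigma> i)))"
proof -
  have \<sigma>_le: "\<sigma> i \<le> d" if "i \<le> d" for i
    using \<sigma> that by (auto dest: bij_betw_apply)
  have coord_sum: "poly (\<Sum>i<Suc d. smult (c i) (lagrange_basis (\<sigma> i))) (x (\<sigma> m)) = c m"
    if "m < Suc d" for c m
  proof -
    have "poly (\<Sum>i<Suc d. smult (c i) (lagrange_basis (\<sigma> i))) (x (\<sigma> m))
        = (\<Sum>i<Suc d. c i * poly (lagrange_basis (\<sigma> i)) (x (\<sigma> m)))"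
      by (simp add: poly_sum)
    also have "\<dots> = (\<Sum>i<Suc d. c i * of_bool (i = m))"
      using that \<sigma> \<sigma>_le
      by (intro sum.cong refl) (auto simp: poly_lagrange_basis bij_betw_def inj_on_eq_iff)
    finally show ?thesis
      using that by simp
  qed
  have expansion: "v = (\<Sum>i<Suc d. smult (poly v (x (\<sigma> i))) (lagrange_basis (\<sigma> i)))"
    if "v \<in> Pd d" for v
  proof (rule poly_eqI_nodes)
    show "degree v \<le> d"
      using that by (simp add: Pd_def)
    show "degree (\<Sum>i<Suc d. smult (poly v (x (\<sigma> i))) (lagrange_basis (\<sigma> i))) \<le> d"
      by (intro degree_sum_smult_le) (simp add: lagrange_basis_def degree_lagrange_interp)
    fix k assume "k \<le> d"
    then obtain m where "m \<le> d" "k = \<sigma> m"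
      using \<sigma> by (auto simp: bij_betw_def)
    then show "poly v (x k) = poly (\<Sum>i<Suc d. smult (poly v (x (\<sigma> i))) (lagrange_basis (\<sigma> i))) (x k)"
      using coord_sum[of m "\<lambda>i. poly v (x (\<sigma> i))"] by (metis less_Suc_eq_le)
  qed
  have basis_in: "lagrange_basis (\<sigma> i) \<in> Pd d" for i
    by (simp add: Pd_def lagrange_basis_def degree_lagrange_interp)
  show "ordered_basis (Pd d) (Suc d) (\<lambda>i. lagrange_basis (\<sigma> i))"
    by (rule ordered_basisI[OF basis_in expansion coord_sum])
  show "matrix_of (Suc d) (\<lambda>i. lagrange_basis (\<sigma> i)) A (\<lambda>i j. poly (A (lagrange_basis (\<sigma> j))) (x (\<sigma> i)))"
    if "linear_on (Pd d) A"
    using that basis_in by (intro matrix_of_coordinates[OF expansion]) (auto simp: linear_on_def)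
qed

end

section \<open>Orthogonal polynomials for a discrete measure\<close>

locale discrete_inner_product = interpolation_nodes +
  fixes w :: "nat \<Rightarrow> real"
  assumes weights_pos: "i \<le> d \<Longrightarrow> 0 < w i"
begin

definition inner :: "real poly \<Rightarrow> real poly \<Rightarrow> real" where
  "inner f g = (\<Sum>i\<le>d. w i * poly f (x i) * poly g (x i))"

lemma inner_zero_left [simp]: "inner 0 g = 0"
  by (simp add: inner_def)

lemma inner_commute: "inner f g = inner g f"
  unfolding inner_def by (simp add: algebra_simps)

lemma inner_diff_left: "inner (f - g) h = inner f h - inner g h"
  unfolding inner_def by (simp add: algebra_simps sum_subtractf)

lemma inner_smult_left: "inner (smult c f) g = c * inner f g"
  unfolding inner_def by (simp add: algebra_simps sum_distrib_left)

lemma inner_sum_left: "inner (\<Sum>i\<in>A. f i) g = (\<Sum>i\<in>A. inner (f i) g)"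
  unfolding inner_def
  by (simp add: poly_sum sum_distrib_left sum_distrib_right sum.swap[of _ A] algebra_simps)

lemma inner_pCons_zero_commute: "inner (pCons 0 f) g = inner f (pCons 0 g)"
  unfolding inner_def by (simp add: algebra_simps)

lemma inner_self_pos:
  assumes "degree f \<le> d" "f \<noteq> 0"
  shows "0 < inner f f"
proof -
  obtain k where k: "k \<le> d" "poly f (x k) \<noteq> 0"
    using poly_eqI_nodes[of f 0] assms by auto
  show ?thesis
    unfolding inner_def
  proof (rule sum_pos2[of _ k])
    have "0 < poly f (x k) * poly f (x k)"
      using k(2) not_real_square_gt_zero by blast
    then show "0 < w k * poly f (x k) * poly f (x k)"
      using weights_pos[OF k(1)] by (simp add: mult.assoc)
    show "0 \<le> w i * poly f (x i) * poly f (x i)" if "i \<in> {..d}" for i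
      using that weights_pos[of i] by (simp add: mult.assoc)
  qed (use k in auto)
qed

end

locale monic_orthogonal_family = discrete_inner_product +
  fixes p :: "nat \<Rightarrow> real poly"
  assumes degree_family: "j \<le> d \<Longrightarrow> degree (p j) = j"
    and monic_family: "j \<le> d \<Longrightarrow> lead_coeff (p j) = 1"
    and orthogonal_family: "i \<le> d \<Longrightarrow> j \<le> d \<Longrightarrow> i \<noteq> j \<Longrightarrow> inner (p i) (p j) = 0"
begin

lemma coeff_family: "j \<le> d \<Longrightarrow> coeff (p j) j = 1"
  using monic_family degree_family by simp

lemma inner_family_self_pos: "j \<le> d \<Longrightarrow> 0 < inner (p j) (p j)"
  using inner_self_pos[of "p j"] degree_family[of j] coeff_family[of j] by fastforce

lemma degree_sub_leading_term:
  assumes "j \<le> d" "degree f \<le> j"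
  shows "degree (f - smult (coeff f j) (p j)) < j \<or> f - smult (coeff f j) (p j) = 0"
proof -
  let ?g = "f - smult (coeff f j) (p j)"
  have "degree ?g \<le> j"
    using assms degree_family[of j] by (intro degree_diff_le) (auto intro: order_trans[OF degree_smult_le])
  moreover have "coeff ?g j = 0"
    using coeff_family[OF assms(1)] by simp
  ultimately show ?thesis
    by (metis le_neq_implies_less leading_coeff_0_iff)
qed

lemma span_family:
  assumes "k \<le> d" "degree f \<le> k"
  shows "\<exists>c. f = (\<Sum>j\<le>k. smult (c j) (p j))"
  using assms
proof (induction k arbitrary: f)
  case 0
  then have "f = smult (coeff f 0) (p 0)"
    using degree_sub_leading_term[of 0 f] by auto
  then show ?case
    by (intro exI[of _ "\<lambda>_. coeff f 0"]) simp
next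
  case (Suc k)
  let ?g = "f - smult (coeff f (Suc k)) (p (Suc k))"
  have "degree ?g \<le> k"
    using degree_sub_leading_term[of "Suc k" f] Suc.prems by auto
  then obtain c where c: "?g = (\<Sum>j\<le>k. smult (c j) (p j))"
    using Suc by auto
  have "f = (\<Sum>j\<le>Suc k. smult ((c(Suc k := coeff f (Suc k))) j) (p j))"
    using c by (simp add: algebra_simps)
  then show ?case
    by blast
qed

lemma inner_family_eq_0_if_degree_less:
  assumes "j \<le> d" "degree f < j"
  shows "inner f (p j) = 0"
proof -
  have "degree f \<le> j - 1" "j - 1 \<le> d"
    using assms by auto
  then obtain c where c: "f = (\<Sum>i\<le>j - 1. smult (c i) (p i))"
    using span_family by blast
  have "inner f (p j) = (\<Sum>i\<le>j - 1. c i * inner (p i) (p j))"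
    unfolding c by (simp add: inner_sum_left inner_smult_left)
  also have "\<dots> = 0"
    using assms by (intro sum.neutral) (auto simp: orthogonal_family)
  finally show ?thesis .
qed

definition fourier_coeff :: "nat \<Rightarrow> real poly \<Rightarrow> real" where
  "fourier_coeff i f = inner f (p i) / inner (p i) (p i)"

lemma fourier_coeff_sum:
  assumes "m < Suc d"
  shows "fourier_coeff m (\<Sum>i<Suc d. smult (c i) (p i)) = c m"
proof -
  have "inner (\<Sum>i<Suc d. smult (c i) (p i)) (p m) = (\<Sum>i<Suc d. c i * inner (p i) (p m))"
    by (simp add: inner_sum_left inner_smult_left del: sum.lessThan_Suc)
  also have "\<dots> = c m * inner (p m) (p m)"
    using assms by (subst sum.remove[of _ m]) (auto intro!: sum.neutral simp: orthogonal_family)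
  finally show ?thesis
    using inner_family_self_pos[of m] assms by (simp add: fourier_coeff_def)
qed

lemma fourier_expansion:
  assumes "v \<in> Pd d"
  shows "v = (\<Sum>i<Suc d. smult (fourier_coeff i v) (p i))"
proof -
  obtain c where c: "v = (\<Sum>i<Suc d. smult (c i) (p i))"
    using span_family[of d v] assms by (auto simp: Pd_def lessThan_Suc_atMost)
  have "(\<Sum>i<Suc d. smult (c i) (p i)) = (\<Sum>i<Suc d. smult (fourier_coeff i v) (p i))"
    by (intro sum.cong refl) (simp add: c fourier_coeff_sum del: sum.lessThan_Suc)
  then show ?thesis
    using c by simp
qed

lemma family_in_Pd: "j < Suc d \<Longrightarrow> p j \<in> Pd d"
  by (simp add: Pd_def degree_family)

lemma ordered_basis_family: "ordered_basis (Pd d) (Suc d) p"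
  by (rule ordered_basisI[OF family_in_Pd fourier_expansion fourier_coeff_sum])

lemma matrix_of_family:
  "linear_on (Pd d) A \<Longrightarrow> matrix_of (Suc d) p A (\<lambda>i j. fourier_coeff i (A (p j)))"
  using family_in_Pd by (intro matrix_of_coordinates[OF fourier_expansion]) (auto simp: linear_on_def)

lemma irred_tridiagonal_multiplication:
  assumes X: "\<And>f k. k \<le> d \<Longrightarrow> poly (X f) (x k) = x k * poly f (x k)"
  shows "irred_tridiagonal_mat (Suc d) (\<lambda>i j. fourier_coeff i (X (p j)))"
proof -
  have inner_X: "inner (X (p j)) (p i) = inner (pCons 0 (p j)) (p i)" for i j
    unfolding inner_def by (intro sum.cong refl) (simp add: X)
  have degree_x_family: "degree (pCons 0 (p j)) \<le> Suc j" if "j \<le> d" for j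
    using degree_pCons_le[of 0 "p j"] degree_family[OF that] by simp
  have vanish: "inner (pCons 0 (p j)) (p i) = 0" if "j + 1 < i" "i \<le> d" for i j
    using that degree_x_family[of j] by (intro inner_family_eq_0_if_degree_less) auto
  have next_pos: "0 < inner (pCons 0 (p i)) (p (Suc i))" if "Suc i \<le> d" for i
  proof -
    let ?q = "pCons 0 (p i) - p (Suc i)"
    have "degree ?q \<le> Suc i"
      using degree_x_family[of i] degree_family[of "Suc i"] that by (intro degree_diff_le) auto
    moreover have "coeff ?q (Suc i) = 0"
      using coeff_family[of i] coeff_family[of "Suc i"] that by simp
    ultimately have "degree ?q < Suc i \<or> ?q = 0"
      by (metis le_neq_implies_less leading_coeff_0_iff)
    then have "inner ?q (p (Suc i)) = 0"
      using that by (elim disjE) (simp_all add: inner_family_eq_0_if_degree_less)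
    then show ?thesis
      using inner_family_self_pos[OF that] by (simp add: inner_diff_left)
  qed
  show ?thesis
    unfolding irred_tridiagonal_mat_def fourier_coeff_def inner_X
  proof (intro conjI allI impI)
    fix i j assume "i < Suc d" "j < Suc d" "j + 1 < i \<or> i + 1 < j"
    then show "inner (pCons 0 (p j)) (p i) / inner (p i) (p i) = 0"
      using vanish[of j i] vanish[of i j] inner_pCons_zero_commute[of "p j" "p i"]
      by (auto simp: inner_commute)
  next
    fix i assume "i + 1 < Suc d"
    then show "inner (pCons 0 (p i)) (p (i + 1)) / inner (p (i + 1)) (p (i + 1)) \<noteq> 0"
      and "inner (pCons 0 (p (i + 1))) (p i) / inner (p i) (p i) \<noteq> 0"
      using next_pos[of i] inner_family_self_pos[of i] inner_family_self_pos[of "Suc i"]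
        inner_pCons_zero_commute[of "p (Suc i)" "p i"]
      by (auto simp: inner_commute)
  qed
qed

end

definition tridiag_apply :: "(nat \<Rightarrow> real) \<Rightarrow> (nat \<Rightarrow> real) \<Rightarrow> (nat \<Rightarrow> real) \<Rightarrow> nat
    \<Rightarrow> (nat \<Rightarrow> real) \<Rightarrow> nat \<Rightarrow> real" where
  "tridiag_apply b a c d v i = (if i < d then b i * v (i + 1) else 0) + a i * v i
     + (if 0 < i then c i * v (i - 1) else 0)"

lemma tridiag_apply_cong:
  "(\<And>i. i \<le> d \<Longrightarrow> u i = v i) \<Longrightarrow> k \<le> d \<Longrightarrow> tridiag_apply b a c d u k = tridiag_apply b a c d v k"
  by (simp add: tridiag_apply_def)

lemma tridiag_apply_add:
  "tridiag_apply b a c d (\<lambda>i. u i + v i) = (\<lambda>i. tridiag_apply b a c d u i + tridiag_apply b a c d v i)"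
  by (simp add: fun_eq_iff tridiag_apply_def algebra_simps)

lemma tridiag_apply_scale:
  "tridiag_apply b a c d (\<lambda>i. t * v i) = (\<lambda>i. t * tridiag_apply b a c d v i)"
  by (simp add: fun_eq_iff tridiag_apply_def algebra_simps)

definition symmetrizing_weight :: "(nat \<Rightarrow> real) \<Rightarrow> (nat \<Rightarrow> real) \<Rightarrow> nat \<Rightarrow> real" where
  "symmetrizing_weight b c i = (\<Prod>l<i. b l / c (Suc l))"

lemma symmetrizing_weight_pos:
  "(\<And>l. l < i \<Longrightarrow> 0 < b l * c (Suc l)) \<Longrightarrow> 0 < symmetrizing_weight b c i"
  unfolding symmetrizing_weight_def by (intro prod_pos) (simp add: zero_less_divide_iff zero_less_mult_iff)

lemma tridiag_apply_symmetric:
  fixes b a c :: "nat \<Rightarrow> real"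
  assumes "\<And>i. i < d \<Longrightarrow> c (Suc i) \<noteq> 0"
  defines "w \<equiv> symmetrizing_weight b c"
  shows "(\<Sum>i\<le>d. w i * tridiag_apply b a c d u i * v i) = (\<Sum>i\<le>d. w i * u i * tridiag_apply b a c d v i)"
proof -
  have balance: "w i * b i = w (Suc i) * c (Suc i)" if "i < d" for i
    using assms(1)[OF that] by (simp add: w_def symmetrizing_weight_def)
  define off where "off u v = (\<Sum>i<d. w i * b i * u (i + 1) * v i)" for u v :: "nat \<Rightarrow> real"
  have lower: "(\<Sum>i\<le>d. w i * (if 0 < i then c i * u (i - 1) else 0) * v i) = off v u" for u v
  proof -
    have "(\<Sum>i\<le>d. w i * (if 0 < i then c i * u (i - 1) else 0) * v i)
        = (\<Sum>i<d. w (Suc i) * c (Suc i) * u i * v (Suc i))"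
      by (subst sum.atMost_shift) (simp add: mult.assoc)
    also have "\<dots> = off v u"
      unfolding off_def by (intro sum.cong refl) (simp add: balance)
    finally show ?thesis .
  qed
  have upper: "(\<Sum>i\<le>d. w i * (if i < d then b i * u (i + 1) else 0) * v i) = off u v" for u v
    unfolding off_def by (simp add: lessThan_Suc_atMost[symmetric] mult.assoc)
  have expand: "(\<Sum>i\<le>d. w i * tridiag_apply b a c d u i * v i)
      = off u v + (\<Sum>i\<le>d. w i * a i * u i * v i) + off v u" for u v
  proof -
    have "(\<Sum>i\<le>d. w i * tridiag_apply b a c d u i * v i)
        = (\<Sum>i\<le>d. w i * (if i < d then b i * u (i + 1) else 0) * v i) + (\<Sum>i\<le>d. w i * a i * u i * v i)
          + (\<Sum>i\<le>d. w i * (if 0 < i then c i * u (i - 1) else 0) * v i)"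
      unfolding tridiag_apply_def by (simp add: sum.distrib algebra_simps del: sum.atMost_Suc)
    then show ?thesis
      by (simp only: upper lower)
  qed
  have "(\<Sum>i\<le>d. w i * a i * u i * v i) = (\<Sum>i\<le>d. w i * a i * v i * u i)"
    "(\<Sum>i\<le>d. w i * u i * tridiag_apply b a c d v i) = (\<Sum>i\<le>d. w i * tridiag_apply b a c d v i * u i)"
    by (simp_all add: mult_ac)
  then show ?thesis
    using expand[of u v] expand[of v u] by linarith
qed

section \<open>The square of a tridiagonal matrix with vanishing diagonal\<close>

text \<open>When the diagonal vanishes except in the last entry, the square couples exactly the pairs
  related by \<open>zigzag_adjacent d\<close>.  This graph on \<open>{..d}\<close> is the path \<open>0, 2, 4, \<dots>, d, d - 1, d - 3, \<dots>\<close>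
  (or its analogue starting at \<open>1\<close> for odd \<open>d\<close>), enumerated by \<open>zigzag d\<close>.\<close>

definition zigzag_adjacent :: "nat \<Rightarrow> nat \<Rightarrow> nat \<Rightarrow> bool" where
  "zigzag_adjacent d k j \<longleftrightarrow> k = j + 2 \<or> j = k + 2 \<or> (k + 1 = d \<and> j = d) \<or> (k = d \<and> j + 1 = d)"

lemma tridiag_apply_unit:
  "l \<le> d \<Longrightarrow> j \<le> d \<Longrightarrow> tridiag_apply b a c d (\<lambda>i. of_bool (i = j)) l
     = (if j = l + 1 then b l else 0) + (if j = l then a l else 0) + (if j + 1 = l then c l else 0)"
  by (auto simp: tridiag_apply_def)

lemma tridiag_square_entry:
  assumes "\<And>l. l < d \<Longrightarrow> a l = 0" "k \<le> d" "j \<le> d" "k \<noteq> j"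
  shows "tridiag_apply b a c d (tridiag_apply b a c d (\<lambda>i. of_bool (i = j))) k
    = (if j = k + 2 then b k * b (k + 1) else 0) + (if k = j + 2 then c k * c (k - 1) else 0)
      + (if k + 1 = d \<and> j = d then b k * a d else 0) + (if k = d \<and> j + 1 = d then a d * c d else 0)"
proof (cases k)
  case 0
  then show ?thesis
    using assms unfolding tridiag_apply_def[of _ _ _ _ "tridiag_apply b a c d _"]
    by (cases "d = 0") (simp_all add: tridiag_apply_unit)
next
  case (Suc m)
  then show ?thesis
    using assms unfolding tridiag_apply_def[of _ _ _ _ "tridiag_apply b a c d _"]
    by (cases "Suc m = d") (simp_all add: tridiag_apply_unit)
qed

definition zigzag :: "nat \<Rightarrow> nat \<Rightarrow> nat" where
  "zigzag d m = (if 2 * m \<le> d then 2 * m + d mod 2 else 2 * (d - m) + 1 - d mod 2)"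

lemma zigzag_le: "m \<le> d \<Longrightarrow> zigzag d m \<le> d"
  unfolding zigzag_def by (cases "even d") (auto elim!: evenE oddE)

lemma even_zigzag: "m \<le> d \<Longrightarrow> even (zigzag d m) \<longleftrightarrow> (2 * m \<le> d \<longleftrightarrow> even d)"
  unfolding zigzag_def by (auto simp: even_add)

lemma zigzag_inj:
  assumes "m \<le> d" "n \<le> d" "zigzag d m = zigzag d n"
  shows "m = n"
proof -
  have "2 * m \<le> d \<longleftrightarrow> 2 * n \<le> d"
    using assms even_zigzag by metis
  then show ?thesis
    using assms unfolding zigzag_def by (auto split: if_splits)
qed

lemma bij_betw_zigzag: "bij_betw (zigzag d) {..d} {..d}"
proof -
  have "inj_on (zigzag d) {..d}"
    using zigzag_inj by (auto intro: inj_onI)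
  moreover from this have "zigzag d ` {..d} = {..d}"
    using zigzag_le by (intro endo_inj_surj) auto
  ultimately show ?thesis
    by (simp add: bij_betw_def)
qed

lemma zigzag_adjacent_zigzag_Suc:
  assumes "Suc k \<le> d"
  shows "zigzag_adjacent d (zigzag d k) (zigzag d (Suc k))"
proof -
  have "2 * Suc k \<le> d \<or> d < 2 * k \<or> d = 2 * k \<or> d = Suc (2 * k)"
    by arith
  then consider "2 * Suc k \<le> d" | "d < 2 * k" | "d = 2 * k" | "d = Suc (2 * k)"
    by blast
  then show ?thesis
  proof cases
    case 1
    then have "zigzag d (Suc k) = zigzag d k + 2"
      by (simp add: zigzag_def)
    then show ?thesis
      by (simp add: zigzag_adjacent_def)
  next
    case 2
    moreover have "d mod 2 \<le> 1"
      by simp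
    ultimately have "zigzag d k = zigzag d (Suc k) + 2"
      using assms by (simp add: zigzag_def)
    then show ?thesis
      by (simp add: zigzag_adjacent_def)
  next
    case 3
    then show ?thesis
      using assms by (cases k) (simp_all add: zigzag_adjacent_def zigzag_def)
  next
    case 4
    then show ?thesis
      by (simp add: zigzag_adjacent_def zigzag_def)
  qed
qed

lemma zigzag_adjacent_zigzagD:
  assumes "m \<le> d" "n \<le> d" "zigzag_adjacent d (zigzag d m) (zigzag d n)"
  shows "m = Suc n \<or> n = Suc m"
proof -
  from assms(3) consider "zigzag d m = zigzag d n + 2 \<or> zigzag d n = zigzag d m + 2"
    | "zigzag d m + 1 = d" "zigzag d n = d" | "zigzag d m = d" "zigzag d n + 1 = d"
    unfolding zigzag_adjacent_def by blast
  then show ?thesis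
  proof cases
    case 1
    then have "2 * m \<le> d \<longleftrightarrow> 2 * n \<le> d"
      using assms even_zigzag by (metis dvd_add_triv_right_iff even_numeral)
    moreover have "d mod 2 \<le> 1"
      by simp
    ultimately show ?thesis
      using 1 assms unfolding zigzag_def by (cases "2 * m \<le> d") auto
  next
    case 2
    then have "even (zigzag d m) \<longleftrightarrow> odd d" "even (zigzag d n) \<longleftrightarrow> even d"
      by (metis even_Suc Suc_eq_plus1)+
    then have "\<not> 2 * m \<le> d" "2 * n \<le> d"
      using even_zigzag[OF assms(1)] even_zigzag[OF assms(2)] by auto
    moreover have "d mod 2 \<le> 1"
      by simp
    ultimately show ?thesis
      using 2 assms unfolding zigzag_def by auto
  next
    case 3
    then have "even (zigzag d n) \<longleftrightarrow> odd d" "even (zigzag d m) \<longleftrightarrow> even d"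
      by (metis even_Suc Suc_eq_plus1)+
    then have "2 * m \<le> d" "\<not> 2 * n \<le> d"
      using even_zigzag[OF assms(1)] even_zigzag[OF assms(2)] by auto
    moreover have "d mod 2 \<le> 1"
      by simp
    ultimately show ?thesis
      using 3 assms unfolding zigzag_def by auto
  qed
qed

lemma zigzag_adjacent_iff:
  assumes "m \<le> d" "n \<le> d"
  shows "zigzag_adjacent d (zigzag d m) (zigzag d n) \<longleftrightarrow> m = Suc n \<or> n = Suc m"
proof
  show "m = Suc n \<or> n = Suc m" if "zigzag_adjacent d (zigzag d m) (zigzag d n)"
    using zigzag_adjacent_zigzagD[OF assms that] .
  have symmetric: "zigzag_adjacent d k j \<longleftrightarrow> zigzag_adjacent d j k" for k j
    unfolding zigzag_adjacent_def by auto
  show "zigzag_adjacent d (zigzag d m) (zigzag d n)" if "m = Suc n \<or> n = Suc m"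
    using that assms zigzag_adjacent_zigzag_Suc[of n d] zigzag_adjacent_zigzag_Suc[of m d] symmetric
    by auto
qed

lemma irred_tridiagonal_square_zigzag:
  assumes "\<And>l. l < d \<Longrightarrow> a l = 0" "a d \<noteq> 0"
    and "\<And>l. l < d \<Longrightarrow> b l \<noteq> 0" "\<And>l. 0 < l \<Longrightarrow> l \<le> d \<Longrightarrow> c l \<noteq> 0"
  shows "irred_tridiagonal_mat (Suc d) (\<lambda>i j.
    tridiag_apply b a c d (tridiag_apply b a c d (\<lambda>l. of_bool (l = zigzag d j))) (zigzag d i))"
proof -
  let ?M = "\<lambda>k j. tridiag_apply b a c d (tridiag_apply b a c d (\<lambda>l. of_bool (l = j))) k"
  have vanish: "?M k j = 0" if "k \<le> d" "j \<le> d" "k \<noteq> j" "\<not> zigzag_adjacent d k j" for k j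
    using that by (auto simp: tridiag_square_entry assms(1) zigzag_adjacent_def)
  have nonzero: "?M k j \<noteq> 0" if "k \<le> d" "j \<le> d" "zigzag_adjacent d k j" for k j
  proof -
    have "k \<noteq> j"
      using that by (auto simp: zigzag_adjacent_def)
    then show ?thesis
      using that assms by (auto simp: tridiag_square_entry zigzag_adjacent_def)
  qed
  show ?thesis
    unfolding irred_tridiagonal_mat_def
  proof (intro conjI allI impI)
    fix i j assume "i < Suc d" "j < Suc d" "j + 1 < i \<or> i + 1 < j"
    then show "?M (zigzag d i) (zigzag d j) = 0"
      using zigzag_adjacent_iff[of i d j] zigzag_inj[of i d j] zigzag_le[of i d] zigzag_le[of j d]
      by (intro vanish) auto
  next
    fix i assume "i + 1 < Suc d"
    then have "i \<le> d" "Suc i \<le> d"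
      by auto
    then have "zigzag_adjacent d (zigzag d (Suc i)) (zigzag d i)"
      "zigzag_adjacent d (zigzag d i) (zigzag d (Suc i))"
      using zigzag_adjacent_iff by auto
    with \<open>i \<le> d\<close> \<open>Suc i \<le> d\<close>
    show "?M (zigzag d (i + 1)) (zigzag d i) \<noteq> 0" "?M (zigzag d i) (zigzag d (i + 1)) \<noteq> 0"
      by (simp_all add: nonzero zigzag_le)
  qed
qed

section \<open>Eigenvectors of a lower bidiagonal operator\<close>

text \<open>If \<open>T \<phi>\<^sub>k = k \<phi>\<^sub>k + \<beta>\<^sub>k \<phi>\<^sub>k\<^sub>-\<^sub>1\<close>, the coefficients \<open>e\<^sub>k\<close> of an eigenvector for the eigenvalue \<open>j\<close>
  are determined by \<open>e\<^sub>j = 1\<close> and \<open>(j - k) e\<^sub>k = \<beta>\<^sub>k\<^sub>+\<^sub>1 e\<^sub>k\<^sub>+\<^sub>1\<close>.\<close>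

definition bidiagonal_eigenvector :: "(nat \<Rightarrow> real poly) \<Rightarrow> (nat \<Rightarrow> real) \<Rightarrow> nat \<Rightarrow> real poly" where
  "bidiagonal_eigenvector \<phi> \<beta> j = (\<Sum>k\<le>j. smult (\<Prod>l\<in>{Suc k..j}. \<beta> l / (real j - real l + 1)) (\<phi> k))"

lemma bidiagonal_eigenvector_eigen:
  assumes add: "\<And>f g. T (f + g) = T f + T g" and scale: "\<And>c f. T (smult c f) = smult c (T f)"
    and T0: "T (\<phi> 0) = 0"
    and TSuc: "\<And>k. Suc k \<le> j \<Longrightarrow> T (\<phi> (Suc k)) = smult (real (Suc k)) (\<phi> (Suc k)) + smult (\<beta> (Suc k)) (\<phi> k)"
  shows "T (bidiagonal_eigenvector \<phi> \<beta> j) = smult (real j) (bidiagonal_eigenvector \<phi> \<beta> j)"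
proof -
  define e where "e k = (\<Prod>l\<in>{Suc k..j}. \<beta> l / (real j - real l + 1))" for k
  have e_j: "e j = 1"
    by (simp add: e_def)
  have e_step: "e k * (real j - real k) = e (Suc k) * \<beta> (Suc k)" if "k < j" for k
  proof -
    have "{Suc k..j} = insert (Suc k) {Suc (Suc k)..j}"
      using that by auto
    then show ?thesis
      using that by (simp add: e_def)
  qed
  have T_sum: "T (\<Sum>k\<in>A. f k) = (\<Sum>k\<in>A. T (f k))" for A and f :: "nat \<Rightarrow> real poly"
    using add scale[of 0 0] by (induction A rule: infinite_finite_induct) auto
  have T_phi: "T (\<phi> k) = smult (real k) (\<phi> k) + (if k = 0 then 0 else smult (\<beta> k) (\<phi> (k - 1)))"
    if "k \<le> j" for k
    using that T0 TSuc by (cases k) auto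
  have "T (bidiagonal_eigenvector \<phi> \<beta> j)
      = (\<Sum>k\<le>j. smult (e k * real k) (\<phi> k))
        + (\<Sum>k\<le>j. if k = 0 then 0 else smult (e k * \<beta> k) (\<phi> (k - 1)))"
    unfolding bidiagonal_eigenvector_def e_def[symmetric] T_sum scale
    by (simp add: T_phi sum.distrib smult_add_right if_distrib[of "smult _"] cong: if_cong)
  also have "(\<Sum>k\<le>j. if k = 0 then 0 else smult (e k * \<beta> k) (\<phi> (k - 1)))
      = (\<Sum>k<j. smult (e k * (real j - real k)) (\<phi> k))"
    by (subst sum.atMost_shift) (simp add: e_step)
  also have "(\<Sum>k\<le>j. smult (e k * real k) (\<phi> k))
      = (\<Sum>k<j. smult (e k * real k) (\<phi> k)) + smult (real j) (\<phi> j)"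
    by (simp add: lessThan_Suc_atMost[symmetric] e_j)
  also have "\<dots> + (\<Sum>k<j. smult (e k * (real j - real k)) (\<phi> k))
      = smult (real j) ((\<Sum>k<j. smult (e k) (\<phi> k)) + smult (e j) (\<phi> j))"
    by (simp add: e_j smult_sum_right smult_add_right sum.distrib[symmetric] smult_add_left[symmetric]
        algebra_simps)
  also have "\<dots> = smult (real j) (bidiagonal_eigenvector \<phi> \<beta> j)"
    by (simp add: bidiagonal_eigenvector_def e_def[symmetric] lessThan_Suc_atMost[symmetric])
  finally show ?thesis .
qed

lemma monic_bidiagonal_eigenvector:
  assumes "\<And>k. k \<le> j \<Longrightarrow> degree (\<phi> k) = k" "lead_coeff (\<phi> j) = 1"
  shows "degree (bidiagonal_eigenvector \<phi> \<beta> j) = j" "lead_coeff (bidiagonal_eigenvector \<phi> \<beta> j) = 1"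
proof -
  let ?p = "bidiagonal_eigenvector \<phi> \<beta> j"
  have "degree ?p \<le> j"
    unfolding bidiagonal_eigenvector_def using assms(1) by (intro degree_sum_smult_le) simp
  moreover have "coeff ?p j = 1"
  proof -
    have "coeff ?p j = (\<Sum>k\<le>j. (\<Prod>l\<in>{Suc k..j}. \<beta> l / (real j - real l + 1)) * coeff (\<phi> k) j)"
      by (simp add: bidiagonal_eigenvector_def coeff_sum)
    also have "\<dots> = (\<Sum>k\<le>j. of_bool (k = j))"
      using assms by (intro sum.cong refl) (auto simp: coeff_eq_0)
    finally show ?thesis
      by simp
  qed
  ultimately show "degree ?p = j" "lead_coeff ?p = 1"
    by (metis le_antisym le_degree zero_neq_one)+
qed

lemma pochhammer_add2_div:
  fixes z :: real
  assumes "0 < z"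
  shows "pochhammer (z + 2) n / pochhammer z (n + 1) = (z + real n + 1) / (z * (z + 1))"
proof -
  have "z * (z + 1) * pochhammer (z + 2) n = pochhammer z (n + 2)"
    by (simp add: pochhammer_rec numeral_2_eq_2 add.assoc)
  also have "\<dots> = (z + real n + 1) * pochhammer z (n + 1)"
    using pochhammer_rec'[of z "n + 1"] by (simp add: numeral_2_eq_2 add.assoc)
  finally have "z * (z + 1) * pochhammer (z + 2) n = (z + real n + 1) * pochhammer z (n + 1)" .
  moreover have "pochhammer z (n + 1) \<noteq> 0" "z * (z + 1) \<noteq> 0"
    using assms pochhammer_pos[of z "n + 1"] by auto
  ultimately show ?thesis
    by (simp add: frac_eq_eq algebra_simps)
qed

lemma pochhammer_central_div:
  "pochhammer (real m + 1) m / pochhammer (real m + 2) (m + 1) = 1 / (2 * (2 * real m + 1))"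
proof -
  have "(real m + 1) * pochhammer (real m + 2) (m + 1) = pochhammer (real m + 1) (m + 2)"
    by (simp add: pochhammer_rec numeral_2_eq_2 add.assoc)
  also have "\<dots> = (real m + 1) * (2 * (2 * real m + 1) * pochhammer (real m + 1) m)"
    using pochhammer_rec'[of "real m + 1" "m + 1"] pochhammer_rec'[of "real m + 1" m]
    by (simp add: numeral_2_eq_2 algebra_simps)
  finally have "pochhammer (real m + 2) (m + 1) = 2 * (2 * real m + 1) * pochhammer (real m + 1) m"
    by simp
  moreover have "0 < pochhammer (real m + 1) m"
    by (intro pochhammer_pos) simp
  ultimately show ?thesis
    by simp
qed

section \<open>A Newton basis adapted to the nodes y (y + 1)\<close>

text \<open>For \<open>r + s = 0\<close> one has \<open>l (l + 1) = \<theta>\<^sub>d\<^sub>-\<^sub>l\<close>, so this is the Newton basis for the nodes taken in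
  the order \<open>\<theta>\<^sub>d, \<theta>\<^sub>d\<^sub>-\<^sub>1, \<dots>\<close>.\<close>

definition newton_poly :: "nat \<Rightarrow> real poly" where
  "newton_poly k = (\<Prod>l<k. [:- (real l * (real l + 1)), 1:])"

definition newton_prod :: "nat \<Rightarrow> real \<Rightarrow> real" where
  "newton_prod k y = (\<Prod>l<k. (y - real l) * (y + real l + 1))"

lemma monic_newton_poly: "degree (newton_poly k) = k" "lead_coeff (newton_poly k) = 1"
  by (simp add: newton_poly_def degree_prod_sum_eq) (unfold newton_poly_def lead_coeff_prod, simp)

lemma poly_newton_poly: "poly (newton_poly k) (y * (y + 1)) = newton_prod k y"
  unfolding newton_poly_def newton_prod_def poly_prod
  by (intro prod.cong refl) (simp add: algebra_simps)

lemma newton_prod_Suc: "newton_prod (Suc m) y = newton_prod m y * (y - real m) * (y + real m + 1)"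
  by (simp add: newton_prod_def)

lemma newton_prod_Suc_shift_down:
  "newton_prod (Suc m) (y - 1) = newton_prod m y * (y - real m) * (y - real m - 1)"
proof (induction m)
  case (Suc m)
  then show ?case
    by (simp only: newton_prod_Suc[of "Suc m"]) (simp add: newton_prod_Suc algebra_simps)
qed (simp add: newton_prod_def)

lemma newton_prod_Suc_shift_up:
  "newton_prod (Suc m) (y + 1) = newton_prod m y * (y + real m + 1) * (y + real m + 2)"
proof (induction m)
  case (Suc m)
  then show ?case
    by (simp only: newton_prod_Suc[of "Suc m"]) (simp add: newton_prod_Suc algebra_simps)
qed (simp add: newton_prod_def)

lemma Lstar_eq_tridiag_apply:
  "Lstar r s d f = interp r s d (tridiag_apply (bstar r s d) (astar r s d) (cstar r s d) d
     (\<lambda>i. poly f (theta r s d i)))"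
  by (simp add: Lstar_def tridiag_apply_def[abs_def])

lemma linear_on_Lmap: "linear_on (Pd d) (Lmap r s d)"
proof (rule linear_onI)
  show "Lmap r s d f \<in> Pd d" for f
    by (simp add: Lmap_def Pd_def interp_eq_lagrange_interp degree_lagrange_interp)
  show "Lmap r s d (f + g) = Lmap r s d f + Lmap r s d g" for f g
    by (simp add: Lmap_def interp_eq_lagrange_interp algebra_simps lagrange_interp_add)
  show "Lmap r s d (smult c f) = smult c (Lmap r s d f)" for c f
    using lagrange_interp_scale[of "theta r s d" d c]
    by (simp add: Lmap_def interp_eq_lagrange_interp mult.left_commute)
qed

lemma Lstar_add: "Lstar r s d (f + g) = Lstar r s d f + Lstar r s d g"
  by (simp add: Lstar_eq_tridiag_apply interp_eq_lagrange_interp tridiag_apply_add lagrange_interp_add)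

lemma Lstar_smult: "Lstar r s d (smult c f) = smult c (Lstar r s d f)"
  by (simp add: Lstar_eq_tridiag_apply interp_eq_lagrange_interp tridiag_apply_scale lagrange_interp_scale)

lemma linear_on_Lstar: "linear_on (Pd d) (Lstar r s d)"
  by (rule linear_onI[OF _ Lstar_add Lstar_smult])
    (simp add: Lstar_eq_tridiag_apply Pd_def interp_eq_lagrange_interp degree_lagrange_interp)

lemma linear_on_plus_scalar:
  assumes "linear_on (Pd d) A"
  shows "linear_on (Pd d) (\<lambda>f. A f + smult c f)"
  using assms unfolding linear_on_def Pd_def
  by (auto simp: smult_add_right algebra_simps intro: degree_add_le order_trans[OF degree_smult_le])

locale zero_sum_parameters =
  fixes r s :: real and d :: nat
  assumes r_gt: "-1 < r" and s_gt: "-1 < s" and r_neq_0: "r \<noteq> 0" and r_plus_s: "r + s = 0"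
begin

lemma theta_eq: "theta r s d i = (real d - real i) * (real d - real i + 1)"
  using r_plus_s by (simp add: theta_def add.assoc)

lemma inj_on_theta: "inj_on (theta r s d) {..d}"
proof (rule inj_onI)
  have strict: "theta r s d j < theta r s d i" if "i < j" "j \<le> d" for i j
    unfolding theta_eq using that by (intro mult_strict_mono) auto
  fix i j assume "i \<in> {..d}" "j \<in> {..d}" "theta r s d i = theta r s d j"
  then show "i = j"
    using strict[of i j] strict[of j i] by (cases i j rule: linorder_cases) auto
qed

sublocale interpolation_nodes "theta r s d" d
  by unfold_locales (rule inj_on_theta)

definition down_coeff :: "real \<Rightarrow> real" where
  "down_coeff y = (r - y) * (y + real d + 1) / (2 * (2 * y + 1))"

definition up_coeff :: "real \<Rightarrow> real" where
  "up_coeff y = - (real d - y) * (y + r + 1) / (2 * (2 * y + 1))"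

lemma bstar_eq:
  assumes "i < d"
  shows "bstar r s d i = down_coeff (real d - real i)"
proof -
  define y where "y = real d - real i"
  have y: "1 \<le> y" "2 * real d - 2 * real i + r + s = 2 * y" "real i - real d - s = r - y"
    "2 * y + real i + 1 = y + real d + 1"
    using assms r_plus_s by (auto simp: y_def)
  have "bstar r s d i = y * (r - y) * (pochhammer (2 * y + 2) i / pochhammer (2 * y) (i + 1))"
    using assms r_plus_s by (simp add: bstar_def y_def eq_neg_iff_add_eq_0[symmetric] algebra_simps)
  also have "\<dots> = y * (r - y) * ((y + real d + 1) / (2 * y * (2 * y + 1)))"
    using pochhammer_add2_div[of "2 * y" i] y by (simp add: mult.assoc)
  also have "\<dots> = down_coeff y"
  proof -
    have "2 * y * (2 * y + 1) \<noteq> 0" "2 * (2 * y + 1) \<noteq> 0"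
      using y(1) by auto
    then show ?thesis
      unfolding down_coeff_def times_divide_eq_right by (subst frac_eq_eq) (simp_all add: algebra_simps)
  qed
  finally show ?thesis
    by (simp add: y_def)
qed

lemma cstar_eq:
  assumes "0 < i" "i \<le> d"
  shows "cstar r s d i = up_coeff (real d - real i)"
proof -
  define m where "m = d - i"
  have m: "real d - real i + r + s + 1 = real m + 1" "real d - real i + r + s + 2 = real m + 2"
    "real d - real i = real m"
    using assms r_plus_s by (auto simp: m_def)
  have "cstar r s d i = real i * (real i - real d - r - 1)
      * (pochhammer (real m + 1) m / pochhammer (real m + 2) (m + 1))"
    using assms r_plus_s by (simp add: cstar_def m_def of_nat_diff eq_neg_iff_add_eq_0[symmetric] algebra_simps)
  also have "\<dots> = real i * (real i - real d - r - 1) * (1 / (2 * (2 * real m + 1)))"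
    by (simp only: pochhammer_central_div)
  also have "\<dots> = up_coeff (real m)"
    using assms by (simp add: up_coeff_def m(3)[symmetric] algebra_simps)
  finally show ?thesis
    by (simp add: m(3))
qed

lemma bstar_neg: "i < d \<Longrightarrow> bstar r s d i < 0"
proof -
  assume "i < d"
  moreover have "r < 1"
    using s_gt r_plus_s by linarith
  ultimately have "(r - (real d - real i)) * (real d - real i + real d + 1) < 0"
    by (intro mult_neg_pos) auto
  with \<open>i < d\<close> show ?thesis
    by (simp add: bstar_eq down_coeff_def divide_neg_pos)
qed

lemma cstar_neg: "0 < i \<Longrightarrow> i \<le> d \<Longrightarrow> cstar r s d i < 0"
proof -
  assume i: "0 < i" "i \<le> d"
  then have "0 < (real d - (real d - real i)) * (real d - real i + r + 1)"
    using r_gt by (intro mult_pos_pos) auto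
  with i show ?thesis
    by (simp add: cstar_eq down_coeff_def up_coeff_def divide_neg_pos)
qed

lemma astar_shifted:
  assumes "i \<le> d"
  shows "astar r s d i + (r - real d) / 2 = (if i = d then r * (real d + 1) / 2 else 0)"
proof -
  have sum: "down_coeff y + up_coeff y = (r - real d) / 2" if "0 \<le> y" for y
  proof -
    have "down_coeff y + up_coeff y
        = ((r - y) * (y + real d + 1) + - (real d - y) * (y + r + 1)) / (2 * (2 * y + 1))"
      unfolding down_coeff_def up_coeff_def by (rule add_divide_distrib[symmetric])
    also have "\<dots> = (r - real d) * (2 * y + 1) / (2 * (2 * y + 1))"
      by (simp add: algebra_simps)
    also have "\<dots> = (r - real d) / 2"
      using that by (intro mult_divide_mult_cancel_right) simp
    finally show ?thesis .
  qed
  have "cstar r s d 0 = 0" "bstar r s d d = 0"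
    by (simp_all add: cstar_def bstar_def)
  then show ?thesis
    using assms sum[of "real d - real i"]
    by (cases "i = 0"; cases "i = d")
      (auto simp: astar_def thetas_def bstar_eq cstar_eq up_coeff_def field_simps)
qed

lemma poly_Lmap: "k \<le> d \<Longrightarrow> poly (Lmap r s d f) (theta r s d k) = theta r s d k * poly f (theta r s d k)"
  unfolding Lmap_def interp_eq_lagrange_interp by (rule poly_lagrange_interp)

lemma poly_Lstar:
  "k \<le> d \<Longrightarrow> poly (Lstar r s d f) (theta r s d k)
     = tridiag_apply (bstar r s d) (astar r s d) (cstar r s d) d (\<lambda>i. poly f (theta r s d i)) k"
  unfolding Lstar_eq_tridiag_apply interp_eq_lagrange_interp by (rule poly_lagrange_interp)

definition Lstar_shifted :: "real poly \<Rightarrow> real poly" where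
  "Lstar_shifted f = Lstar r s d f + smult ((r - real d) / 2) f"

definition shifted_diagonal :: "nat \<Rightarrow> real" where
  "shifted_diagonal i = (if i = d then r * (real d + 1) / 2 else 0)"

lemma poly_Lstar_shifted:
  assumes "k \<le> d"
  shows "poly (Lstar_shifted f) (theta r s d k)
     = tridiag_apply (bstar r s d) shifted_diagonal (cstar r s d) d (\<lambda>i. poly f (theta r s d i)) k"
proof -
  let ?v = "\<lambda>i. poly f (theta r s d i)"
  have "poly (Lstar_shifted f) (theta r s d k)
      = tridiag_apply (bstar r s d) (\<lambda>i. astar r s d i + (r - real d) / 2) (cstar r s d) d ?v k"
    using assms by (simp add: Lstar_shifted_def poly_Lstar tridiag_apply_def algebra_simps)
  also have "\<dots> = tridiag_apply (bstar r s d) shifted_diagonal (cstar r s d) d ?v k"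
    using astar_shifted[OF assms] by (simp add: tridiag_apply_def shifted_diagonal_def)
  finally show ?thesis .
qed

lemma poly_Lstar_shifted_twice:
  assumes "k \<le> d"
  shows "poly (Lstar_shifted (Lstar_shifted f)) (theta r s d k)
    = tridiag_apply (bstar r s d) shifted_diagonal (cstar r s d) d
        (tridiag_apply (bstar r s d) shifted_diagonal (cstar r s d) d (\<lambda>i. poly f (theta r s d i))) k"
  using assms by (simp add: poly_Lstar_shifted cong: tridiag_apply_cong)

lemma linear_on_Lstar_shifted: "linear_on (Pd d) Lstar_shifted"
  unfolding Lstar_shifted_def[abs_def] by (intro linear_on_plus_scalar linear_on_Lstar)

lemma diagonal_tridiagonal_lagrange_zigzag:
  defines "B \<equiv> \<lambda>i. lagrange_basis (zigzag d i)"
  shows "ordered_basis (Pd d) (Suc d) B"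
    and "diagonal_mat (Suc d) (\<lambda>i j. poly (Lmap r s d (B j)) (theta r s d (zigzag d i)))"
    and "irred_tridiagonal_mat (Suc d)
      (\<lambda>i j. poly ((Lstar_shifted \<circ> Lstar_shifted) (B j)) (theta r s d (zigzag d i)))"
proof -
  show "ordered_basis (Pd d) (Suc d) B"
    unfolding B_def by (rule ordered_basis_lagrange_basis(1)[OF bij_betw_zigzag])
  show "diagonal_mat (Suc d) (\<lambda>i j. poly (Lmap r s d (B j)) (theta r s d (zigzag d i)))"
    unfolding diagonal_mat_def B_def
    by (auto simp: poly_Lmap poly_lagrange_basis zigzag_le less_Suc_eq_le dest: zigzag_inj)
  have "poly ((Lstar_shifted \<circ> Lstar_shifted) (B j)) (theta r s d (zigzag d i))
      = tridiag_apply (bstar r s d) shifted_diagonal (cstar r s d) d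
          (tridiag_apply (bstar r s d) shifted_diagonal (cstar r s d) d
            (\<lambda>l. of_bool (l = zigzag d j))) (zigzag d i)" if "i < Suc d" for i j
    using that unfolding B_def
    by (simp add: poly_Lstar_shifted_twice zigzag_le poly_lagrange_basis cong: tridiag_apply_cong)
  moreover have "irred_tridiagonal_mat (Suc d) (\<lambda>i j. tridiag_apply (bstar r s d) shifted_diagonal
      (cstar r s d) d (tridiag_apply (bstar r s d) shifted_diagonal (cstar r s d) d
        (\<lambda>l. of_bool (l = zigzag d j))) (zigzag d i))"
    using bstar_neg cstar_neg r_neq_0
    by (intro irred_tridiagonal_square_zigzag) (auto simp: shifted_diagonal_def dest: less_imp_neq)
  ultimately show "irred_tridiagonal_mat (Suc d)
      (\<lambda>i j. poly ((Lstar_shifted \<circ> Lstar_shifted) (B j)) (theta r s d (zigzag d i)))"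
    by (simp add: irred_tridiagonal_mat_def)
qed

lemma tridiag_apply_Lstar_difference_form:
  assumes "i \<le> d"
  defines "y \<equiv> real d - real i"
  shows "tridiag_apply (bstar r s d) (astar r s d) (cstar r s d) d (\<lambda>i. poly f (theta r s d i)) i
    = down_coeff y * (poly f ((y - 1) * (y - 1 + 1)) - poly f (y * (y + 1)))
      + up_coeff y * (poly f ((y + 1) * (y + 1 + 1)) - poly f (y * (y + 1)))"
proof -
  have theta_y: "theta r s d i = y * (y + 1)"
    "i < d \<Longrightarrow> theta r s d (Suc i) = (y - 1) * (y - 1 + 1)"
    "0 < i \<Longrightarrow> theta r s d (i - Suc 0) = (y + 1) * (y + 1 + 1)"
    by (simp_all add: theta_eq y_def of_nat_diff algebra_simps)
  let ?f = "\<lambda>i. poly f (theta r s d i)"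
  have down: "(if i < d then bstar r s d i * ?f (i + 1) else 0) - bstar r s d i * ?f i
      = down_coeff y * (poly f ((y - 1) * (y - 1 + 1)) - poly f (y * (y + 1)))"
  proof (cases "i < d")
    case False
    then have "i = d" "y = 0"
      using assms(1) by (simp_all add: y_def)
    then show ?thesis
      by (simp add: bstar_def)
  qed (simp add: bstar_eq theta_y y_def[symmetric] right_diff_distrib)
  have up: "(if 0 < i then cstar r s d i * ?f (i - 1) else 0) - cstar r s d i * ?f i
      = up_coeff y * (poly f ((y + 1) * (y + 1 + 1)) - poly f (y * (y + 1)))"
  proof (cases "0 < i")
    case False
    then show ?thesis
      by (simp add: cstar_def up_coeff_def y_def)
  qed (use assms(1) in \<open>simp add: cstar_eq theta_y y_def[symmetric] right_diff_distrib\<close>)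
  have "tridiag_apply (bstar r s d) (astar r s d) (cstar r s d) d ?f i
      = ((if i < d then bstar r s d i * ?f (i + 1) else 0) - bstar r s d i * ?f i)
        + ((if 0 < i then cstar r s d i * ?f (i - 1) else 0) - cstar r s d i * ?f i)"
    by (simp add: tridiag_apply_def astar_def thetas_def algebra_simps)
  then show ?thesis
    by (simp only: down up)
qed

definition newton_beta :: "nat \<Rightarrow> real" where
  "newton_beta k = real k * ((real k - 1) * r * (real d + 1) - real k * real d * (r + 1)
     + (real k - 1) * real k)"

lemma down_up_coeff_identity:
  assumes "0 \<le> y"
  shows "down_coeff y * ((y - real m) * (- 2 * real m - 2)) + up_coeff y * ((y + real m + 1) * (2 * real m + 2))
    = (real m + 1) * (y - real m) * (y + real m + 1) + newton_beta (Suc m)"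
proof -
  have "down_coeff y * ((y - real m) * (- 2 * real m - 2)) + up_coeff y * ((y + real m + 1) * (2 * real m + 2))
      = ((r - y) * (y + real d + 1) * ((y - real m) * (- 2 * real m - 2))
        + - (real d - y) * (y + r + 1) * ((y + real m + 1) * (2 * real m + 2))) / (2 * (2 * y + 1))"
    by (simp add: down_coeff_def up_coeff_def add_divide_distrib)
  also have "(r - y) * (y + real d + 1) * ((y - real m) * (- 2 * real m - 2))
        + - (real d - y) * (y + r + 1) * ((y + real m + 1) * (2 * real m + 2))
      = (2 * (2 * y + 1)) * ((real m + 1) * (y - real m) * (y + real m + 1) + newton_beta (Suc m))"
    by (simp add: newton_beta_def algebra_simps)
  finally show ?thesis
    using assms by simp
qed

lemma Lstar_newton_poly_0: "Lstar r s d (newton_poly 0) = 0"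
  unfolding Lstar_eq_tridiag_apply interp_eq_lagrange_interp
  using tridiag_apply_Lstar_difference_form[of _ "newton_poly 0"]
  by (intro lagrange_interp_eqI) (simp_all add: newton_poly_def)

lemma Lstar_newton_poly_Suc:
  assumes "Suc m \<le> d"
  shows "Lstar r s d (newton_poly (Suc m))
    = smult (real (Suc m)) (newton_poly (Suc m)) + smult (newton_beta (Suc m)) (newton_poly m)"
  unfolding Lstar_eq_tridiag_apply interp_eq_lagrange_interp
proof (rule lagrange_interp_eqI)
  show "degree (smult (real (Suc m)) (newton_poly (Suc m)) + smult (newton_beta (Suc m)) (newton_poly m)) \<le> d"
    using assms by (intro degree_add_le) (auto intro: order_trans[OF degree_smult_le] simp: monic_newton_poly)
  fix i assume "i \<le> d"
  define y where "y = real d - real i"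
  have "0 \<le> y"
    using \<open>i \<le> d\<close> by (simp add: y_def)
  have "tridiag_apply (bstar r s d) (astar r s d) (cstar r s d) d
      (\<lambda>i. poly (newton_poly (Suc m)) (theta r s d i)) i
      = down_coeff y * (newton_prod (Suc m) (y - 1) - newton_prod (Suc m) y)
        + up_coeff y * (newton_prod (Suc m) (y + 1) - newton_prod (Suc m) y)"
    using \<open>i \<le> d\<close> by (simp only: tridiag_apply_Lstar_difference_form poly_newton_poly y_def)
  also have "\<dots> = newton_prod m y * (down_coeff y * ((y - real m) * (- 2 * real m - 2))
      + up_coeff y * ((y + real m + 1) * (2 * real m + 2)))"
    unfolding newton_prod_Suc_shift_down newton_prod_Suc_shift_up newton_prod_Suc[of m y]
    by (simp add: algebra_simps)
  also have "\<dots> = newton_prod m y * ((real m + 1) * (y - real m) * (y + real m + 1) + newton_beta (Suc m))"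
    by (simp only: down_up_coeff_identity[OF \<open>0 \<le> y\<close>])
  also have "\<dots> = real (Suc m) * newton_prod (Suc m) y + newton_beta (Suc m) * newton_prod m y"
    by (simp add: newton_prod_Suc algebra_simps)
  also have "\<dots> = poly (smult (real (Suc m)) (newton_poly (Suc m)) + smult (newton_beta (Suc m)) (newton_poly m))
      (theta r s d i)"
    by (simp add: theta_eq poly_newton_poly y_def)
  finally show "tridiag_apply (bstar r s d) (astar r s d) (cstar r s d) d
      (\<lambda>i. poly (newton_poly (Suc m)) (theta r s d i)) i
    = poly (smult (real (Suc m)) (newton_poly (Suc m)) + smult (newton_beta (Suc m)) (newton_poly m))
      (theta r s d i)" .
qed

definition eigenpoly :: "nat \<Rightarrow> real poly" where
  "eigenpoly = bidiagonal_eigenvector newton_poly newton_beta"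

lemma Lstar_eigenpoly: "j \<le> d \<Longrightarrow> Lstar r s d (eigenpoly j) = smult (real j) (eigenpoly j)"
  unfolding eigenpoly_def
  by (intro bidiagonal_eigenvector_eigen Lstar_add Lstar_smult Lstar_newton_poly_0 Lstar_newton_poly_Suc)
    auto

lemma monic_eigenpoly: "degree (eigenpoly j) = j" "lead_coeff (eigenpoly j) = 1"
  unfolding eigenpoly_def by (intro monic_bidiagonal_eigenvector monic_newton_poly)+

definition weight :: "nat \<Rightarrow> real" where
  "weight = symmetrizing_weight (bstar r s d) (cstar r s d)"

lemma cstar_Suc_neq_0: "i < d \<Longrightarrow> cstar r s d (Suc i) \<noteq> 0"
  using cstar_neg[of "Suc i"] by simp

lemma weight_pos: "i \<le> d \<Longrightarrow> 0 < weight i"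
  unfolding weight_def
  by (rule symmetrizing_weight_pos, rule mult_neg_neg) (simp_all add: bstar_neg cstar_neg)

sublocale discrete_inner_product "theta r s d" d weight
  by unfold_locales (rule weight_pos)

lemma inner_Lstar_commute: "inner (Lstar r s d f) g = inner f (Lstar r s d g)"
proof -
  let ?T = "tridiag_apply (bstar r s d) (astar r s d) (cstar r s d) d"
  have "inner (Lstar r s d f) g = (\<Sum>i\<le>d. weight i * ?T (\<lambda>i. poly f (theta r s d i)) i * poly g (theta r s d i))"
    unfolding inner_def by (intro sum.cong refl) (simp add: poly_Lstar)
  also have "\<dots> = (\<Sum>i\<le>d. weight i * poly f (theta r s d i) * ?T (\<lambda>i. poly g (theta r s d i)) i)"
    unfolding weight_def by (intro tridiag_apply_symmetric cstar_Suc_neq_0)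
  also have "\<dots> = inner f (Lstar r s d g)"
    unfolding inner_def by (intro sum.cong refl) (simp add: poly_Lstar)
  finally show ?thesis .
qed

lemma inner_eigenpoly_eq_0:
  assumes "i \<le> d" "j \<le> d" "i \<noteq> j"
  shows "inner (eigenpoly i) (eigenpoly j) = 0"
proof -
  have "real i * inner (eigenpoly i) (eigenpoly j) = real j * inner (eigenpoly i) (eigenpoly j)"
    using inner_Lstar_commute[of "eigenpoly i" "eigenpoly j"] assms
    by (simp add: Lstar_eigenpoly inner_smult_left inner_commute[of "eigenpoly i"])
  then show ?thesis
    using assms(3) by simp
qed

sublocale monic_orthogonal_family "theta r s d" d weight eigenpoly
  using monic_eigenpoly inner_eigenpoly_eq_0 by unfold_locales auto

lemma Lstar_shifted_twice_eigenpoly: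
  assumes "j \<le> d"
  shows "Lstar_shifted (Lstar_shifted (eigenpoly j))
    = smult ((real j + (r - real d) / 2) ^ 2) (eigenpoly j)"
proof -
  have eigen: "Lstar_shifted (eigenpoly j) = smult (real j + (r - real d) / 2) (eigenpoly j)"
    using assms by (simp add: Lstar_shifted_def Lstar_eigenpoly smult_add_left)
  have "Lstar_shifted (smult c f) = smult c (Lstar_shifted f)" for c f
    by (simp add: Lstar_shifted_def Lstar_smult smult_add_right mult.commute)
  then show ?thesis
    by (simp add: eigen power2_eq_square)
qed

lemma tridiagonal_diagonal_eigenpoly:
  shows "diagonal_mat (Suc d) (\<lambda>i j. fourier_coeff i ((Lstar_shifted \<circ> Lstar_shifted) (eigenpoly j)))"
    and "irred_tridiagonal_mat (Suc d) (\<lambda>i j. fourier_coeff i (Lmap r s d (eigenpoly j)))"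
proof -
  show "diagonal_mat (Suc d) (\<lambda>i j. fourier_coeff i ((Lstar_shifted \<circ> Lstar_shifted) (eigenpoly j)))"
    unfolding diagonal_mat_def
  proof (intro allI impI)
    fix i j assume "i < Suc d" "j < Suc d" "i \<noteq> j"
    then show "fourier_coeff i ((Lstar_shifted \<circ> Lstar_shifted) (eigenpoly j)) = 0"
      by (simp add: Lstar_shifted_twice_eigenpoly fourier_coeff_def inner_smult_left orthogonal_family)
  qed
  show "irred_tridiagonal_mat (Suc d) (\<lambda>i j. fourier_coeff i (Lmap r s d (eigenpoly j)))"
    by (rule irred_tridiagonal_multiplication) (rule poly_Lmap)
qed

lemma leonard_pair_Lmap_Lstar_shifted_twice:
  "leonard_pair (Pd d) (Lmap r s d) (Lstar_shifted \<circ> Lstar_shifted)"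
proof -
  have linear: "linear_on (Pd d) (Lstar_shifted \<circ> Lstar_shifted)"
    by (intro linear_on_comp linear_on_Lstar_shifted)
  note lagrange_matrix = ordered_basis_lagrange_basis(2)[OF bij_betw_zigzag]
  show ?thesis
    unfolding leonard_pair_def
  proof (intro conjI linear_on_Lmap linear exI)
    show "ordered_basis (Pd d) (Suc d) (\<lambda>i. lagrange_basis (zigzag d i))"
      by (rule diagonal_tridiagonal_lagrange_zigzag(1))
    show "matrix_of (Suc d) (\<lambda>i. lagrange_basis (zigzag d i)) (Lmap r s d)
      (\<lambda>i j. poly (Lmap r s d (lagrange_basis (zigzag d j))) (theta r s d (zigzag d i)))"
      by (rule lagrange_matrix[OF linear_on_Lmap])
    show "matrix_of (Suc d) (\<lambda>i. lagrange_basis (zigzag d i)) (Lstar_shifted \<circ> Lstar_shifted)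
      (\<lambda>i j. poly ((Lstar_shifted \<circ> Lstar_shifted) (lagrange_basis (zigzag d j))) (theta r s d (zigzag d i)))"
      by (rule lagrange_matrix[OF linear])
    show "diagonal_mat (Suc d)
      (\<lambda>i j. poly (Lmap r s d (lagrange_basis (zigzag d j))) (theta r s d (zigzag d i)))"
      by (rule diagonal_tridiagonal_lagrange_zigzag(2))
    show "irred_tridiagonal_mat (Suc d)
      (\<lambda>i j. poly ((Lstar_shifted \<circ> Lstar_shifted) (lagrange_basis (zigzag d j))) (theta r s d (zigzag d i)))"
      by (rule diagonal_tridiagonal_lagrange_zigzag(3))
    show "ordered_basis (Pd d) (Suc d) eigenpoly"
      by (rule ordered_basis_family)
    show "matrix_of (Suc d) eigenpoly (Lmap r s d) (\<lambda>i j. fourier_coeff i (Lmap r s d (eigenpoly j)))"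
      by (rule matrix_of_family[OF linear_on_Lmap])
    show "matrix_of (Suc d) eigenpoly (Lstar_shifted \<circ> Lstar_shifted)
      (\<lambda>i j. fourier_coeff i ((Lstar_shifted \<circ> Lstar_shifted) (eigenpoly j)))"
      by (rule matrix_of_family[OF linear])
  qed (rule tridiagonal_diagonal_eigenpoly)+
qed

end

theorem theorem1p3:
  fixes d :: nat and r s :: real
  assumes "r > -1" and "s > -1" and "r \<noteq> 0" and "r + s = 0"
  shows "leonard_pair (Pd d) (Lmap r s d)
           (\<lambda>f. let g = Lstar r s d f + smult ((r - real d) / 2) f
                in Lstar r s d g + smult ((r - real d) / 2) g)"
proof -
  interpret zero_sum_parameters r s d
    using assms by unfold_locales
  have "(\<lambda>f. let g = Lstar r s d f + smult ((r - real d) / 2) f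
             in Lstar r s d g + smult ((r - real d) / 2) g) = Lstar_shifted \<circ> Lstar_shifted"
    by (simp add: fun_eq_iff Lstar_shifted_def Let_def)
  then show ?thesis
    using leonard_pair_Lmap_Lstar_shifted_twice by simp
qed

end
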